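(* Let $n\ge 3$ and let $\pi\in S_n$ be a shallow permutation avoiding $132$. If $\pi_j=n$ with $2\le j\le n-1$, then $\pi_n=1$. If $\pi_j=n$ with $2\le j\le n-2$, then $\pi_1=n-1$.
   Context: For $\pi\in S_n$: $D(\pi)=\sum_{i}|\pi_i-i|$, $I(\pi)$ is the number of inversions, $T(\pi)=n-\mathrm{cyc}(\pi)$ with $\mathrm{cyc}$ the number of cycles in the disjoint cycle decomposition; $\pi$ is shallow if $I(\pi)+T(\pi)=D(\pi)$. A permutation avoids a pattern $\sigma$ if it has no subsequence order-isomorphic to $\sigma$. *)

theory Defs
  imports "HOL-Combinatorics.Permutations"
begin

text \<open>A permutation of [n] = {1..n} is a function p :: nat => nat with p permutes {1..n};
  its one-line notation is p 1, ..., p n.\<close>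

definition displacement :: "nat \<Rightarrow> (nat \<Rightarrow> nat) \<Rightarrow> int" where
  "displacement n p = (\<Sum>i\<in>{1..n}. \<bar>int (p i) - int i\<bar>)"

definition inversions :: "nat \<Rightarrow> (nat \<Rightarrow> nat) \<Rightarrow> nat" where
  "inversions n p = card {(i, j). i \<in> {1..n} \<and> j \<in> {1..n} \<and> i < j \<and> p j < p i}"

definition num_cycles :: "nat \<Rightarrow> (nat \<Rightarrow> nat) \<Rightarrow> nat" where
  "num_cycles n p = card ((\<lambda>i. {(p ^^ k) i | k. True}) ` {1..n})"

definition reflection_length :: "nat \<Rightarrow> (nat \<Rightarrow> nat) \<Rightarrow> nat" where
  "reflection_length n p = n - num_cycles n p"

definition shallow :: "nat \<Rightarrow> (nat \<Rightarrow> nat) \<Rightarrow> bool" where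
  "shallow n p \<longleftrightarrow> int (inversions n p) + int (reflection_length n p) = displacement n p"

definition avoids_132 :: "nat \<Rightarrow> (nat \<Rightarrow> nat) \<Rightarrow> bool" where
  "avoids_132 n p \<longleftrightarrow> \<not> (\<exists>i j k. 1 \<le> i \<and> i < j \<and> j < k \<and> k \<le> n \<and> p i < p k \<and> p k < p j)"

end

theory Submission
  imports Defs "HOL-Combinatorics.Orbits"
begin

text \<open>
  Let p(j) = n with j < n and put q = p o (j n), a permutation of [n-1]: in one-line notation
  the entry p(n) moves to position j, in cycle notation n is cut out of its cycle, so
  T(q) = T(p) - 1. Let L count the entries left of position j that exceed p(n), and R the
  entries strictly between positions j and n that are below p(n). Comparing the statistics gives
    D(p) - I(p) - T(p) >= D(q) - I(q) - T(q) + (L + R - |p(n) - j|),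
  and counting shows L + R >= |p(n) - j|. Induction on n yields the Diaconis-Graham inequality
  I + T <= D, hence for shallow p the permutation q is shallow and L + R <= |p(n) - j|.

  If p avoids 132, every entry left of n exceeds p(n), so L = j - 1, and every value below p(n)
  sits between positions j and n, so R >= p(n) - 1; for j >= 2 this forces p(n) = 1. For the
  second claim the same argument is applied to q and its maximum n - 1: avoiding 132 puts n - 1
  to the left of n in p, and q(n-1) = p(n-1), which is not 1, leaves only position 1 for it.
\<close>

lemma orbit_comp_transpose_subset:
  assumes "inj f" and "f b = a" and "x \<noteq> a"
  shows "orbit (f \<circ> transpose b a) x \<subseteq> orbit f x - {a}"
proof -
  define g where "g = f \<circ> transpose b a"
  have g_in_orbit: "g z \<in> orbit f z" if "z \<noteq> a" for z
  proof (cases "z = b")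
    case True
    then have "g z = f a" using \<open>f b = a\<close> by (simp add: g_def)
    then show ?thesis using \<open>z = b\<close> \<open>f b = a\<close> by (metis orbit.base orbit.step)
  next
    case False
    then show ?thesis using that by (simp add: g_def orbit.base)
  qed
  have "inj g" using \<open>inj f\<close> by (simp add: g_def inj_compose)
  moreover have "g a = a" using \<open>f b = a\<close> by (simp add: g_def)
  ultimately have g_neq: "g z \<noteq> a" if "z \<noteq> a" for z
    using that by (metis injD)
  have "y \<in> orbit f x \<and> y \<noteq> a" if "y \<in> orbit g x" for y
    using that
  proof induction
    case base
    then show ?case using g_in_orbit g_neq \<open>x \<noteq> a\<close> by simp
  next
    case (step y)
    then show ?case using orbit_trans[OF g_in_orbit[of y]] g_neq[of y] by simp
  qed
  then show ?thesis unfolding g_def by auto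
qed

lemma orbit_subset_comp_transpose:
  assumes "inj f" and "f b = a" and "b \<noteq> a" and "x \<noteq> a"
  shows "orbit f x - {a} \<subseteq> orbit (f \<circ> transpose b a) x"
proof -
  define g where "g = f \<circ> transpose b a"
  have g_b: "g b = f a" by (simp add: g_def)
  have g_other: "g z = f z" if "z \<noteq> a" "z \<noteq> b" for z
    using that by (simp add: g_def)
  have f_eq_a_iff: "f z = a \<longleftrightarrow> z = b" for z
    using \<open>inj f\<close> \<open>f b = a\<close> by (auto dest: injD)
  \<comment> \<open>Where the walk of f passes through a, the walk of g jumps from b straight to f a.\<close>
  have "(y \<noteq> a \<longrightarrow> y \<in> orbit g x) \<and> (y = a \<longrightarrow> f a \<in> orbit g x)" if "y \<in> orbit f x" for y
    using that
  proof induction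
    case base
    show ?case
    proof (cases "x = b")
      case True
      then show ?thesis using f_eq_a_iff[of x] g_b orbit.base[of g x] by simp
    next
      case False
      then show ?thesis using f_eq_a_iff[of x] g_other[OF \<open>x \<noteq> a\<close> False] orbit.base[of g x] by simp
    qed
  next
    case (step y)
    show ?case
    proof (cases "y = a")
      case True
      then show ?thesis using step.IH f_eq_a_iff[of a] \<open>b \<noteq> a\<close> by auto
    next
      case False
      then have "y \<in> orbit g x" using step.IH by blast
      show ?thesis
      proof (cases "y = b")
        case True
        then show ?thesis using g_b orbit.step[OF \<open>y \<in> orbit g x\<close>] \<open>f b = a\<close> by simp
      next
        case False
        then show ?thesis
          using f_eq_a_iff[of y] g_other[OF \<open>y \<noteq> a\<close> False] orbit.step[OF \<open>y \<in> orbit g x\<close>] by simp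
      qed
    qed
  qed
  then show ?thesis unfolding g_def by auto
qed

lemma orbit_comp_transpose:
  assumes "inj f" and "f b = a" and "b \<noteq> a" and "x \<noteq> a"
  shows "orbit (f \<circ> transpose b a) x = orbit f x - {a}"
  using orbit_comp_transpose_subset[OF assms(1,2,4)] orbit_subset_comp_transpose[OF assms]
  by (rule equalityI)

lemma num_cycles_orbits:
  fixes p :: "nat \<Rightarrow> nat"
  assumes "p permutes {1..n}"
  shows "num_cycles n p = card (orbit p ` {1..n})"
proof -
  have "permutation p" using assms finite_atLeastAtMost by (auto simp: permutation_permutes)
  then show ?thesis by (simp add: num_cycles_def orbit_altdef_permutation)
qed

lemma permutes_self_in_orbit:
  assumes "p permutes S" and "finite S"
  shows "x \<in> orbit p x"
proof -
  have "permutation p" using assms by (auto simp: permutation_permutes)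
  then show ?thesis by (rule permutation_self_in_orbit)
qed

lemma permutes_orbit_eq:
  assumes "p permutes S" and "finite S" and "y \<in> orbit p x"
  shows "orbit p y = orbit p x"
  using orbit_cyclic_eq3[OF cyclic_on_orbit[OF assms(1,2)], of y x] assms(3) by simp

lemma num_cycles_fixed_last:
  fixes p :: "nat \<Rightarrow> nat"
  assumes p: "p permutes {1..n}" and "1 \<le> n" and "p n = n"
  shows "num_cycles n p = Suc (num_cycles (n-1) p)"
proof -
  have "p permutes {1..n-1}"
  proof (rule permutes_superset[OF p])
    fix x assume "x \<in> {1..n} - {1..n-1}"
    then show "p x = x" using assms by (cases "x = n") auto
  qed
  have "{n} \<notin> orbit p ` {1..n-1}"
  proof
    assume "{n} \<in> orbit p ` {1..n-1}"
    then obtain x where "x \<in> {1..n-1}" "orbit p x = {n}" by blast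
    then show False using permutes_self_in_orbit[OF p finite_atLeastAtMost, of x] by auto
  qed
  moreover have "{1..n} = insert n {1..n-1}" using \<open>1 \<le> n\<close> by auto
  then have "orbit p ` {1..n} = insert {n} (orbit p ` {1..n-1})"
    using \<open>p n = n\<close> orbit_eq_singleton_iff[of p n] by simp
  ultimately show ?thesis
    unfolding num_cycles_orbits[OF p] num_cycles_orbits[OF \<open>p permutes {1..n-1}\<close>]
    by simp
qed

lemma permutes_transpose_max:
  fixes p :: "nat \<Rightarrow> nat"
  assumes p: "p permutes {1..n}" and "j \<in> {1..n}" and "p j = n"
  shows "(p \<circ> transpose j n) permutes {1..n-1}"
proof (rule permutes_superset)
  show "(p \<circ> transpose j n) permutes {1..n}"
    using assms by (intro permutes_compose[OF _ p] permutes_swap_id) auto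
  show "(p \<circ> transpose j n) x = x" if "x \<in> {1..n} - {1..n-1}" for x
    using that \<open>p j = n\<close> by (auto simp: transpose_def)
qed

lemma permutes_last_lt_max:
  fixes p :: "nat \<Rightarrow> nat"
  assumes p: "p permutes {1..n}" and "j \<in> {1..n}" "j \<noteq> n" "p j = n"
  shows "p n < n"
proof -
  have "p n \<in> {1..n}" using permutes_in_image[OF p] assms(2) by auto
  moreover have "p n \<noteq> p j" using permutes_inj[OF p] assms(3) by (metis injD)
  ultimately show ?thesis using assms(4) by auto
qed

lemma num_cycles_transpose_max:
  fixes p :: "nat \<Rightarrow> nat"
  assumes p: "p permutes {1..n}" and j: "j \<in> {1..n}" "j \<noteq> n" and "p j = n"
  shows "num_cycles n p = num_cycles (n-1) (p \<circ> transpose j n)"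
proof -
  have "n \<in> orbit p j" using \<open>p j = n\<close> by (metis orbit.base)
  then have "orbit p n = orbit p j" by (rule permutes_orbit_eq[OF p finite_atLeastAtMost])
  moreover have "{1..n} = insert n {1..n-1}" using j by auto
  ultimately have orbits_p: "orbit p ` {1..n} = orbit p ` {1..n-1}" using j by auto
  have "orbit (p \<circ> transpose j n) ` {1..n-1} = (\<lambda>x. orbit p x - {n}) ` {1..n-1}"
    using orbit_comp_transpose[OF permutes_inj[OF p] \<open>p j = n\<close> \<open>j \<noteq> n\<close>] by (intro image_cong) auto
  then have orbits_q: "orbit (p \<circ> transpose j n) ` {1..n-1} = (\<lambda>S. S - {n}) ` orbit p ` {1..n-1}"
    by (simp add: image_image)
  have "inj_on (\<lambda>S. S - {n}) (orbit p ` {1..n-1})"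
  proof (rule inj_onI)
    fix S T assume "S \<in> orbit p ` {1..n-1}" "T \<in> orbit p ` {1..n-1}" "S - {n} = T - {n}"
    then obtain x y where "x \<in> {1..n-1}" "S = orbit p x" "T = orbit p y" "S - {n} = T - {n}"
      by blast
    moreover have "x \<in> S - {n}"
      using \<open>x \<in> {1..n-1}\<close> \<open>S = orbit p x\<close> permutes_self_in_orbit[OF p finite_atLeastAtMost] by auto
    ultimately show "S = T" using permutes_orbit_eq[OF p finite_atLeastAtMost, of x y] by auto
  qed
  then show ?thesis
    unfolding num_cycles_orbits[OF p] num_cycles_orbits[OF permutes_transpose_max[OF p j(1) \<open>p j = n\<close>]]
      orbits_p orbits_q by (simp add: card_image)
qed

lemma num_cycles_le: "num_cycles n p \<le> n"
  unfolding num_cycles_def using card_image_le[of "{1..n}"] by simp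

lemma displacement_fixed_last:
  assumes "1 \<le> n" and "p n = n"
  shows "displacement n p = displacement (n-1) p"
proof -
  have "{1..n} = insert n {1..n-1}" using assms(1) by auto
  then show ?thesis using assms by (simp add: displacement_def)
qed

lemma displacement_transpose_max:
  fixes p :: "nat \<Rightarrow> nat"
  assumes p: "p permutes {1..n}" and j: "j \<in> {1..n}" "j \<noteq> n" and "p j = n"
  shows "displacement n p = displacement (n-1) (p \<circ> transpose j n)
           - \<bar>int (p n) - int j\<bar> + (int n - int j) + (int n - int (p n))"
proof -
  define S where "S = {1..n-1} - {j}"
  define q where "q = p \<circ> transpose j n"
  have q_other: "\<And>i. i \<in> S \<Longrightarrow> q i = p i" and "q j = p n"
    using \<open>p j = n\<close> by (auto simp: S_def q_def transpose_def)
  have "p n \<le> n" "j < n" using permutes_in_image[OF p, of n] j by auto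
  have fin: "finite S" and "n \<notin> insert j S" "j \<notin> S" using j by (auto simp: S_def)
  have "{1..n-1} = insert j S" "{1..n} = insert n (insert j S)" using j by (auto simp: S_def)
  then have "displacement n p = (int n - int (p n)) + (int n - int j) + (\<Sum>i\<in>S. \<bar>int (p i) - int i\<bar>)"
    and "displacement (n-1) q = \<bar>int (p n) - int j\<bar> + (\<Sum>i\<in>S. \<bar>int (q i) - int i\<bar>)"
    using fin \<open>n \<notin> insert j S\<close> \<open>j \<notin> S\<close> \<open>p j = n\<close> \<open>p n \<le> n\<close> \<open>j < n\<close> \<open>q j = p n\<close>
    by (simp_all add: displacement_def)
  moreover have "(\<Sum>i\<in>S. \<bar>int (q i) - int i\<bar>) = (\<Sum>i\<in>S. \<bar>int (p i) - int i\<bar>)"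
    using q_other by simp
  ultimately show ?thesis unfolding q_def by simp
qed

definition inversion_set :: "nat set \<Rightarrow> (nat \<Rightarrow> nat) \<Rightarrow> (nat \<times> nat) set" where
  "inversion_set S p = {(i, k). i \<in> S \<and> k \<in> S \<and> i < k \<and> p k < p i}"

lemma inversions_eq_card_inversion_set: "inversions n p = card (inversion_set {1..n} p)"
  by (simp add: inversions_def inversion_set_def)

lemma inversion_set_cong: "(\<And>i. i \<in> S \<Longrightarrow> p i = q i) \<Longrightarrow> inversion_set S p = inversion_set S q"
  by (auto simp: inversion_set_def)

lemma card_inversion_set_insert:
  assumes "finite S" and "a \<notin> S"
  shows "card (inversion_set (insert a S) p)
           = card (inversion_set S p) + card {i \<in> S. i < a \<and> p a < p i} + card {k \<in> S. a < k \<and> p k < p a}"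
proof -
  define Left where "Left = (\<lambda>i. (i, a)) ` {i \<in> S. i < a \<and> p a < p i}"
  define Right where "Right = Pair a ` {k \<in> S. a < k \<and> p k < p a}"
  have "inversion_set (insert a S) p = inversion_set S p \<union> Left \<union> Right"
    by (auto simp: inversion_set_def Left_def Right_def)
  moreover have "finite (inversion_set S p)"
    using assms(1) by (auto intro: finite_subset[of _ "S \<times> S"] simp: inversion_set_def)
  moreover have "inversion_set S p \<inter> Left = {}" "(inversion_set S p \<union> Left) \<inter> Right = {}"
    using assms(2) by (auto simp: inversion_set_def Left_def Right_def)
  moreover have "card Left = card {i \<in> S. i < a \<and> p a < p i}" "card Right = card {k \<in> S. a < k \<and> p k < p a}"
    unfolding Left_def Right_def by (auto intro: card_image inj_onI)
  ultimately show ?thesis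
    using assms(1) by (simp add: card_Un_disjoint Left_def Right_def)
qed

lemma inversions_fixed_last:
  fixes p :: "nat \<Rightarrow> nat"
  assumes p: "p permutes {1..n}" and "1 \<le> n" and "p n = n"
  shows "inversions n p = inversions (n-1) p"
proof -
  have "n \<notin> {1..n-1}" using \<open>1 \<le> n\<close> by auto
  then have "card (inversion_set (insert n {1..n-1}) p) = card (inversion_set {1..n-1} p)
               + card {i \<in> {1..n-1}. i < n \<and> p n < p i} + card {k \<in> {1..n-1}. n < k \<and> p k < p n}"
    by (rule card_inversion_set_insert[OF finite_atLeastAtMost])
  moreover have "insert n {1..n-1} = {1..n}" using \<open>1 \<le> n\<close> by auto
  moreover have "\<not> p n < p i" if "i \<in> {1..n-1}" for i
    using permutes_in_image[OF p, of i] that \<open>p n = n\<close> by auto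
  then have "{i \<in> {1..n-1}. i < n \<and> p n < p i} = {}" "{k \<in> {1..n-1}. n < k \<and> p k < p n} = {}"
    by auto
  ultimately show ?thesis by (simp only: inversions_eq_card_inversion_set card.empty add_0_right)
qed

lemma inversions_le_remove_max:
  fixes p :: "nat \<Rightarrow> nat"
  assumes p: "p permutes {1..n}" and j: "j \<in> {1..n}" "j \<noteq> n" and "p j = n"
  shows "inversions n p \<le> card (inversion_set ({1..n-1} - {j}) p) + (n - j) + (n - 1 - p n)"
proof -
  define S where "S = {1..n-1} - {j}"
  define m where "m = p n"
  have p_le: "p i \<le> n" if "i \<in> {1..n}" for i
    using permutes_in_image[OF p] that by auto
  have "m < n" using permutes_last_lt_max[OF assms] by (simp add: m_def)
  have fin: "finite S" and "j \<notin> S" "n \<notin> insert j S" using j by (auto simp: S_def)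
  have eq_n: "inversions n p = card (inversion_set (insert j S) p) + card {i \<in> insert j S. i < n \<and> m < p i}
                                + card {k \<in> insert j S. n < k \<and> p k < m}"
    proof -
      have "{1..n} = insert n (insert j S)" using j by (auto simp: S_def)
      then show ?thesis unfolding inversions_eq_card_inversion_set m_def
        by (simp only: card_inversion_set_insert[OF finite_insert[THEN iffD2, OF fin] \<open>n \<notin> insert j S\<close>])
    qed
  have eq_j: "card (inversion_set (insert j S) p) = card (inversion_set S p)
                + card {i \<in> S. i < j \<and> n < p i} + card {k \<in> S. j < k \<and> p k < n}"
    using card_inversion_set_insert[OF fin \<open>j \<notin> S\<close>] \<open>p j = n\<close> by simp
  have no_inversions: "{k \<in> insert j S. n < k \<and> p k < m} = {}" "{i \<in> S. i < j \<and> n < p i} = {}"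
    using j by (auto simp: S_def) (use p_le in \<open>fastforce\<close>)
  have "card {k \<in> S. j < k \<and> p k < n} \<le> n - 1 - j"
    by (rule order_trans[OF card_mono[of "{j<..<n}"]]) (auto simp: S_def)
  moreover have "card {i \<in> insert j S. i < n \<and> m < p i} \<le> n - m"
  proof -
    have "p ` {i \<in> insert j S. i < n \<and> m < p i} \<subseteq> {m<..n}"
      using p_le j by (auto simp: S_def)
    moreover have "inj_on p {i \<in> insert j S. i < n \<and> m < p i}"
      by (rule inj_on_subset[OF permutes_inj[OF p]]) simp
    ultimately show ?thesis
      using card_inj_on_le[of p _ "{m<..n}"] by simp
  qed
  ultimately have "inversions n p \<le> card (inversion_set S p) + (n - j) + (n - 1 - m)"
    using eq_n eq_j \<open>m < n\<close> j unfolding no_inversions card.empty by auto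
  then show ?thesis by (simp add: S_def m_def)
qed

lemma inversions_transpose_max:
  fixes p :: "nat \<Rightarrow> nat"
  assumes j: "j \<in> {1..n}" "j \<noteq> n" and "p j = n"
  shows "inversions (n-1) (p \<circ> transpose j n) = card (inversion_set ({1..n-1} - {j}) p)
           + card {i \<in> {1..<j}. p n < p i} + card {k \<in> {j<..<n}. p k < p n}"
proof -
  define S where "S = {1..n-1} - {j}"
  define q where "q = p \<circ> transpose j n"
  have q_other: "\<And>i. i \<in> S \<Longrightarrow> q i = p i" and "q j = p n"
    using \<open>p j = n\<close> by (auto simp: S_def q_def transpose_def)
  have "{1..n-1} = insert j S" and fin: "finite S" and "j \<notin> S" using j by (auto simp: S_def)
  then have "inversions (n-1) q = card (inversion_set S q) + card {i \<in> S. i < j \<and> p n < q i}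
               + card {k \<in> S. j < k \<and> q k < p n}"
    unfolding inversions_eq_card_inversion_set \<open>q j = p n\<close>[symmetric]
    by (simp only:) (rule card_inversion_set_insert[OF fin \<open>j \<notin> S\<close>])
  moreover have "inversion_set S q = inversion_set S p"
    using q_other by (rule inversion_set_cong)
  moreover have "{i \<in> S. i < j \<and> p n < q i} = {i \<in> {1..<j}. p n < p i}"
    and "{k \<in> S. j < k \<and> q k < p n} = {k \<in> {j<..<n}. p k < p n}"
    using q_other j by (auto simp: S_def)
  ultimately show ?thesis unfolding q_def S_def by simp
qed

definition diaconis_graham_gap :: "nat \<Rightarrow> (nat \<Rightarrow> nat) \<Rightarrow> int" where
  "diaconis_graham_gap n p = displacement n p - int (inversions n p) - int (reflection_length n p)"

lemma shallow_iff_diaconis_graham_gap_eq_0: "shallow n p \<longleftrightarrow> diaconis_graham_gap n p = 0"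
  unfolding shallow_def diaconis_graham_gap_def by auto

lemma diaconis_graham_gap_fixed_last:
  fixes p :: "nat \<Rightarrow> nat"
  assumes p: "p permutes {1..n}" and "1 \<le> n" and "p n = n"
  shows "diaconis_graham_gap n p = diaconis_graham_gap (n-1) p"
  using num_cycles_fixed_last[OF assms] num_cycles_le[of "n-1" p]
    displacement_fixed_last[of n p, OF assms(2,3)] inversions_fixed_last[OF assms]
  by (simp add: diaconis_graham_gap_def reflection_length_def)

lemma diaconis_graham_gap_transpose_max:
  fixes p :: "nat \<Rightarrow> nat"
  assumes p: "p permutes {1..n}" and j: "j \<in> {1..n}" "j \<noteq> n" and "p j = n"
  shows "diaconis_graham_gap (n-1) (p \<circ> transpose j n)
           + (int (card {i \<in> {1..<j}. p n < p i}) + int (card {k \<in> {j<..<n}. p k < p n})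
              - \<bar>int (p n) - int j\<bar>)
         \<le> diaconis_graham_gap n p"
proof -
  have "reflection_length n p = Suc (reflection_length (n-1) (p \<circ> transpose j n))"
    using num_cycles_transpose_max[OF assms] num_cycles_le[of "n-1" "p \<circ> transpose j n"] j
    by (simp add: reflection_length_def) arith
  moreover have "p n < n" by (rule permutes_last_lt_max[OF assms])
  then have "int (inversions n p) + int (card {i \<in> {1..<j}. p n < p i}) + int (card {k \<in> {j<..<n}. p k < p n})
               \<le> int (inversions (n-1) (p \<circ> transpose j n)) + (int n - int j) + (int n - 1 - int (p n))"
  proof -
    have "int (n - j) = int n - int j" "int (n - 1 - p n) = int n - 1 - int (p n)"
      using j \<open>p n < n\<close> by auto
    then show ?thesis
      using inversions_le_remove_max[OF assms] inversions_transpose_max[where p = p, OF j \<open>p j = n\<close>]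
      by linarith
  qed
  ultimately show ?thesis
    using displacement_transpose_max[OF assms] unfolding diaconis_graham_gap_def by linarith
qed

lemma card_le_card_filter_add_card_filter_not:
  assumes "finite B" and "inj_on f A" and "f ` A \<subseteq> B"
  shows "card A \<le> card {x \<in> A. P (f x)} + card {y \<in> B. \<not> P y}"
proof -
  have "card A = card ({x \<in> A. P (f x)} \<union> {x \<in> A. \<not> P (f x)})"
    by (rule arg_cong[where f = card]) blast
  also have "\<dots> \<le> card {x \<in> A. P (f x)} + card {x \<in> A. \<not> P (f x)}"
    by (rule card_Un_le)
  also have "card {x \<in> A. \<not> P (f x)} \<le> card {y \<in> B. \<not> P y}"
    using assms by (intro card_inj_on_le[of f]) (auto intro: inj_on_subset)
  finally show ?thesis by simp
qed

lemma abs_last_diff_max_pos_le_card: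
  fixes p :: "nat \<Rightarrow> nat"
  assumes p: "p permutes {1..n}" and j: "j \<in> {1..n}" "j \<noteq> n" and "p j = n"
  shows "\<bar>int (p n) - int j\<bar> \<le> int (card {i \<in> {1..<j}. p n < p i}) + int (card {k \<in> {j<..<n}. p k < p n})"
proof -
  define m where "m = p n"
  have "m < n" using permutes_last_lt_max[OF assms] by (simp add: m_def)
  have "1 \<le> m" using permutes_in_image[OF p, of n] j by (auto simp: m_def)
  have inj: "inj_on p A" for A using permutes_inj[OF p] by (rule inj_on_subset) simp
  have p_eq_iff: "p x = p y \<longleftrightarrow> x = y" for x y
    using permutes_inj[OF p] by (auto dest: injD)
  have "p ` ({1..n} - {j, n}) \<subseteq> {1..n} - {m, n}"
    using permutes_in_image[OF p] p_eq_iff \<open>p j = n\<close> unfolding m_def by auto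
  moreover have "{1..<j} \<subseteq> {1..n} - {j, n}" "{j<..<n} \<subseteq> {1..n} - {j, n}" using j by auto
  ultimately have left: "p ` {1..<j} \<subseteq> {1..n} - {m, n}" and right: "p ` {j<..<n} \<subseteq> {1..n} - {m, n}"
    by (meson image_mono order_trans)+
  have "card {1..<j} \<le> card {i \<in> {1..<j}. m < p i} + card {v \<in> {1..n} - {m, n}. \<not> m < v}"
    by (rule card_le_card_filter_add_card_filter_not[OF _ inj left]) simp
  moreover have "card {j<..<n} \<le> card {k \<in> {j<..<n}. p k < m} + card {v \<in> {1..n} - {m, n}. \<not> v < m}"
    by (rule card_le_card_filter_add_card_filter_not[OF _ inj right]) simp
  moreover have "{v \<in> {1..n} - {m, n}. \<not> m < v} \<subseteq> {1..<m}" by auto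
  then have "card {v \<in> {1..n} - {m, n}. \<not> m < v} \<le> m - 1"
    using card_mono[of "{1..<m}"] by fastforce
  moreover have "{v \<in> {1..n} - {m, n}. \<not> v < m} \<subseteq> {m<..<n}" by auto
  then have "card {v \<in> {1..n} - {m, n}. \<not> v < m} \<le> n - 1 - m"
    using card_mono[of "{m<..<n}"] by fastforce
  moreover have "1 \<le> j" "j < n" using j by auto
  ultimately show ?thesis
    using \<open>m < n\<close> \<open>1 \<le> m\<close> unfolding m_def card_atLeastLessThan card_greaterThanLessThan by arith
qed

theorem diaconis_graham_gap_nonneg:
  fixes p :: "nat \<Rightarrow> nat"
  assumes "p permutes {1..n}"
  shows "0 \<le> diaconis_graham_gap n p"
  using assms
proof (induction n arbitrary: p)
  case 0
  then show ?case by (simp add: diaconis_graham_gap_def displacement_def inversions_def reflection_length_def)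
next
  case (Suc n)
  have "Suc n \<in> p ` {1..Suc n}" using permutes_image[OF Suc.prems] by simp
  then obtain j where j: "j \<in> {1..Suc n}" "p j = Suc n" by auto
  show ?case
  proof (cases "j = Suc n")
    case True
    have "p permutes {1..n}"
      by (rule permutes_superset[OF Suc.prems]) (use True j le_Suc_eq in auto)
    then show ?thesis using Suc.IH diaconis_graham_gap_fixed_last[OF Suc.prems] True j by fastforce
  next
    case False
    have "0 \<le> diaconis_graham_gap n (p \<circ> transpose j (Suc n))"
      using Suc.IH permutes_transpose_max[OF Suc.prems j] by simp
    then show ?thesis
      using diaconis_graham_gap_transpose_max[OF Suc.prems j(1) False j(2)]
        abs_last_diff_max_pos_le_card[OF Suc.prems j(1) False j(2)] by simp
  qed
qed

lemma shallow_transpose_max: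
  fixes p :: "nat \<Rightarrow> nat"
  assumes p: "p permutes {1..n}" and j: "j \<in> {1..n}" "j \<noteq> n" and "p j = n"
    and "shallow n p"
  shows "shallow (n-1) (p \<circ> transpose j n)"
    and "int (card {i \<in> {1..<j}. p n < p i}) + int (card {k \<in> {j<..<n}. p k < p n}) \<le> \<bar>int (p n) - int j\<bar>"
proof -
  have "0 \<le> diaconis_graham_gap (n-1) (p \<circ> transpose j n)"
    using diaconis_graham_gap_nonneg[OF permutes_transpose_max[OF p j(1) \<open>p j = n\<close>]] .
  then show "shallow (n-1) (p \<circ> transpose j n)"
    and "int (card {i \<in> {1..<j}. p n < p i}) + int (card {k \<in> {j<..<n}. p k < p n}) \<le> \<bar>int (p n) - int j\<bar>"
    using diaconis_graham_gap_transpose_max[OF p j \<open>p j = n\<close>] abs_last_diff_max_pos_le_card[OF p j \<open>p j = n\<close>]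
      \<open>shallow n p\<close> unfolding shallow_iff_diaconis_graham_gap_eq_0 by linarith+
qed

lemma shallow_last_eq_1:
  fixes p :: "nat \<Rightarrow> nat"
  assumes p: "p permutes {1..n}" and "shallow n p" and "p j = n" and "2 \<le> j" "j < n"
    and larger: "\<forall>i\<in>{1..<j}. p n < p i"
  shows "p n = 1"
proof -
  have j: "j \<in> {1..n}" "j \<noteq> n" using assms by auto
  define m where "m = p n"
  have "m < n" using permutes_last_lt_max[OF p j \<open>p j = n\<close>] by (simp add: m_def)
  have "1 \<le> m" using permutes_in_image[OF p, of n] j by (auto simp: m_def)
  have "{i \<in> {1..<j}. m < p i} = {1..<j}" using larger by (auto simp: m_def)
  moreover have "{1..<m} \<subseteq> p ` {k \<in> {j<..<n}. p k < m}"
  proof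
    fix v assume v: "v \<in> {1..<m}"
    then have "v \<in> p ` {1..n}" using permutes_image[OF p] \<open>m < n\<close> by auto
    then obtain k where k: "k \<in> {1..n}" "p k = v" by auto
    moreover have "k \<noteq> n" "k \<noteq> j" using k v \<open>m < n\<close> \<open>p j = n\<close> by (auto simp: m_def)
    moreover have "\<not> k < j" using larger[rule_format, of k] k v by (auto simp: m_def)
    ultimately show "v \<in> p ` {k \<in> {j<..<n}. p k < m}" using v by force
  qed
  then have "m - 1 \<le> card {k \<in> {j<..<n}. p k < m}"
    using card_mono[OF _ \<open>{1..<m} \<subseteq> _\<close>] card_image_le[of "{k \<in> {j<..<n}. p k < m}" p] by simp
  ultimately have "int (j - 1) + int (m - 1) \<le> \<bar>int m - int j\<bar>"
    using shallow_transpose_max(2)[OF p j \<open>p j = n\<close> \<open>shallow n p\<close>] unfolding m_def by simp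
  then show ?thesis using \<open>2 \<le> j\<close> \<open>1 \<le> m\<close> unfolding m_def by arith
qed

lemma avoids_132_lt_left:
  fixes p :: "nat \<Rightarrow> nat"
  assumes "avoids_132 n p" and p: "p permutes {1..n}"
    and "1 \<le> i" "i < j" "j < k" "k \<le> n" and "p k < p j"
  shows "p k < p i"
proof -
  have "\<not> p i < p k" using assms unfolding avoids_132_def by blast
  moreover have "p i \<noteq> p k" using permutes_inj[OF p] \<open>i < j\<close> \<open>j < k\<close> by (metis injD less_trans less_irrefl)
  ultimately show ?thesis by simp
qed

lemma shallow_avoids_132_last_eq_1:
  fixes p :: "nat \<Rightarrow> nat"
  assumes p: "p permutes {1..n}" and "shallow n p" and "avoids_132 n p"
    and "p j = n" and "2 \<le> j" "j < n"
  shows "p n = 1"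
proof (rule shallow_last_eq_1[OF p \<open>shallow n p\<close> \<open>p j = n\<close> \<open>2 \<le> j\<close> \<open>j < n\<close>], intro ballI)
  fix i assume "i \<in> {1..<j}"
  moreover have "p n < p j" using permutes_last_lt_max[OF p _ _ \<open>p j = n\<close>] assms by auto
  ultimately show "p n < p i" using avoids_132_lt_left[OF \<open>avoids_132 n p\<close> p] \<open>j < n\<close> by auto
qed

lemma shallow_avoids_132_first_eq:
  fixes p :: "nat \<Rightarrow> nat"
  assumes p: "p permutes {1..n}" and "shallow n p" and av: "avoids_132 n p"
    and "p j = n" and "2 \<le> j" "j + 2 \<le> n"
  shows "p 1 = n - 1"
proof -
  have j: "j \<in> {1..n}" "j \<noteq> n" using assms by auto
  have p_eq_iff: "p x = p y \<longleftrightarrow> x = y" for x y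
    using permutes_inj[OF p] by (auto dest: injD)
  have "p n = 1" using shallow_avoids_132_last_eq_1 assms by simp
  define q where "q = p \<circ> transpose j n"
  have q_other: "q i = p i" if "i \<noteq> j" "i \<noteq> n" for i
    using that by (simp add: q_def transpose_def)
  have q: "q permutes {1..n-1}" "shallow (n-1) q"
    using permutes_transpose_max[OF p j(1) \<open>p j = n\<close>] shallow_transpose_max(1)[OF p j \<open>p j = n\<close> \<open>shallow n p\<close>]
    by (simp_all add: q_def)
  have "n - 1 \<in> p ` {1..n}" using permutes_image[OF p] assms by simp
  then obtain j' where j': "j' \<in> {1..n}" "p j' = n - 1" by auto
  have "j' < j"
  proof (rule ccontr)
    assume "\<not> j' < j"
    moreover have "j' \<noteq> j" using j' \<open>p j = n\<close> assms by auto
    ultimately have "n - 1 < p 1"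
      using avoids_132_lt_left[OF av p, of 1 j j'] j' \<open>p j = n\<close> assms by auto
    moreover have "p 1 \<le> n" using permutes_in_image[OF p, of 1] assms by auto
    ultimately show False using p_eq_iff[of 1 j] \<open>p j = n\<close> assms by auto
  qed
  have "q j' = n - 1" using q_other[of j'] j' \<open>j' < j\<close> j by auto
  moreover have "\<forall>i\<in>{1..<j'}. q (n-1) < q i"
  proof
    fix i assume "i \<in> {1..<j'}"
    moreover have "p (n-1) < p j"
      using permutes_in_image[OF p, of "n-1"] p_eq_iff[of "n-1" j] \<open>p j = n\<close> assms by auto
    ultimately show "q (n-1) < q i"
      using avoids_132_lt_left[OF av p, of i j "n-1"] q_other \<open>j' < j\<close> assms by auto
  qed
  moreover have "q (n-1) \<noteq> 1" using q_other[of "n-1"] p_eq_iff[of "n-1" n] \<open>p n = 1\<close> assms by auto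
  moreover have "j' < n - 1" using \<open>j' < j\<close> \<open>j + 2 \<le> n\<close> by simp
  ultimately have "\<not> 2 \<le> j'" using shallow_last_eq_1[OF q, of j'] by auto
  then have "j' = 1" using j' by simp
  then show ?thesis using j' by simp
qed

theorem lemma3p2:
  fixes n j :: nat and p :: "nat \<Rightarrow> nat"
  assumes "n \<ge> 3"
    and "p permutes {1..n}"
    and "shallow n p"
    and "avoids_132 n p"
    and "p j = n"
  shows "(2 \<le> j \<and> j \<le> n - 1 \<longrightarrow> p n = 1) \<and> (2 \<le> j \<and> j \<le> n - 2 \<longrightarrow> p 1 = n - 1)"
proof (intro conjI impI; elim conjE)
  show "p n = 1" if "2 \<le> j" "j \<le> n - 1"
    using shallow_avoids_132_last_eq_1[OF assms(2-5)] that assms(1) by simp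
  show "p 1 = n - 1" if "2 \<le> j" "j \<le> n - 2"
    using shallow_avoids_132_first_eq[OF assms(2-5)] that assms(1) by simp
qed

end
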